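(* Assume $p<2q-1$. For every finite word $u$ over $B$ accepted by $\widehat{\mathcal{T}_{p/q}}$, there exists a finite word $v$ over $A_p$ accepted by $\mathcal{T}_{p/q}$ such that $\pi(u)=\pi(v)$ and $|u|=|v|$.
   Context: Let $p>q>1$ be coprime integers, $A_p=\{0,\dots,p-1\}$ and $B=\{p-(2q-1),\dots,p-1\}$. For $n\in\mathbb{N}$ and $a\in\mathbb{Z}$, let $\tau(n,a)=\frac{np+a}{q}$, defined only when $q$ divides $np+a$. Let $\mathcal{T}_{p/q}$ (resp. $\widehat{\mathcal{T}_{p/q}}$) be the deterministic automaton with state set $\mathbb{N}$, alphabet $A_p$ (resp. $B$), initial state $0$, and transitions $n\xrightarrow{a}\tau(n,a)$ for $a$ in the alphabet with $\tau(n,a)$ defined. A finite word is accepted if it labels a path starting at $0$. For a finite word $a_k a_{k-1}\cdots a_0$ of integer digits, $\pi(a_k\cdots a_0)=\sum_{i=0}^{k}\frac{a_i}{q}\left(\frac{p}{q}\right)^i$. $|u|$ denotes the length of $u$. *)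

theory Defs
  imports Complex_Main
begin

definition tau :: "int \<Rightarrow> int \<Rightarrow> nat \<Rightarrow> int \<Rightarrow> nat option" where
  "tau p q n a = (if q dvd (int n * p + a) \<and> int n * p + a \<ge> 0
                  then Some (nat ((int n * p + a) div q)) else None)"

text \<open>Run of the automaton on a word; words are lists whose head is the first letter read
  (the most significant digit a_k of a_k ... a_0).\<close>
fun run :: "int \<Rightarrow> int \<Rightarrow> nat \<Rightarrow> int list \<Rightarrow> nat option" where
  "run p q n [] = Some n"
| "run p q n (a # w) = (case tau p q n a of None \<Rightarrow> None | Some m \<Rightarrow> run p q m w)"

definition accepted :: "int \<Rightarrow> int \<Rightarrow> int set \<Rightarrow> int list \<Rightarrow> bool" where
  "accepted p q Alph w \<longleftrightarrow> set w \<subseteq> Alph \<and> run p q 0 w \<noteq> None"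

definition alphA :: "int \<Rightarrow> int set" where
  "alphA p = {0..p-1}"

definition alphB :: "int \<Rightarrow> int \<Rightarrow> int set" where
  "alphB p q = {p - (2*q - 1)..p-1}"

text \<open>pi(a_k ... a_0) = sum_i a_i/q (p/q)^i; the list element at position j is a_(k-j).\<close>
definition piv :: "int \<Rightarrow> int \<Rightarrow> int list \<Rightarrow> real" where
  "piv p q w = (\<Sum>j<length w. (real_of_int (w ! j) / real_of_int q) *
                   (real_of_int p / real_of_int q) ^ (length w - 1 - j))"

end

theory Submission
  imports Defs
begin

text \<open>The value of a word accepted by the automaton is the state it reaches, so it suffices to
  reach, with a word over A_p of the same length, the state reached by a word over B.
  The states reachable in k steps with digits in A_p form an initial segment of the naturals:
  a state m with q m < (n + 1) p is reached from the state q m div p, which is at most n, by the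
  digit q m mod p. A B-step from n into m is such a situation, as its digit is below p.\<close>

lemma run_append_singleton:
  "run p q n (w @ [a]) = (case run p q n w of None \<Rightarrow> None | Some m \<Rightarrow> tau p q m a)"
  by (induction w arbitrary: n) (auto split: option.splits)

lemma tau_eq_Some_iff:
  assumes "0 < q"
  shows "tau p q n a = Some m \<longleftrightarrow> int n * p + a = q * int m"
proof
  assume "tau p q n a = Some m"
  then have dvd: "q dvd int n * p + a" and nonneg: "0 \<le> int n * p + a"
    and m: "m = nat ((int n * p + a) div q)"
    unfolding tau_def by (auto split: if_splits)
  have "0 \<le> (int n * p + a) div q"
    using nonneg assms by (simp add: pos_imp_zdiv_nonneg_iff)
  with m dvd show "int n * p + a = q * int m" by simp
next
  assume "int n * p + a = q * int m"
  with assms show "tau p q n a = Some m" unfolding tau_def by auto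
qed

lemma piv_append_singleton:
  "piv p q (w @ [a]) = (real_of_int p / real_of_int q) * piv p q w + real_of_int a / real_of_int q"
proof -
  let ?r = "real_of_int p / real_of_int q"
  have "piv p q (w @ [a])
      = (\<Sum>j<length w. (real_of_int (w ! j) / real_of_int q) * ?r ^ (length w - j))
        + real_of_int a / real_of_int q"
    unfolding piv_def by (simp add: nth_append)
  also have "(\<Sum>j<length w. (real_of_int (w ! j) / real_of_int q) * ?r ^ (length w - j))
      = ?r * piv p q w"
    unfolding piv_def sum_distrib_left
  proof (rule sum.cong)
    fix j assume "j \<in> {..<length w}"
    then have "length w - j = Suc (length w - 1 - j)" by auto
    then show "(real_of_int (w ! j) / real_of_int q) * ?r ^ (length w - j)
      = ?r * ((real_of_int (w ! j) / real_of_int q) * ?r ^ (length w - 1 - j))"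
      by (simp add: algebra_simps)
  qed simp
  finally show ?thesis .
qed

lemma piv_eq_state_of_run:
  assumes "run p q 0 v = Some m" "0 < q"
  shows "piv p q v = real m"
  using assms(1)
proof (induction v arbitrary: m rule: rev_induct)
  case Nil
  then show ?case by (simp add: piv_def)
next
  case (snoc a w)
  then obtain n where n: "run p q 0 w = Some n" and "tau p q n a = Some m"
    by (auto simp: run_append_singleton split: option.splits)
  then have "q * int m = int n * p + a"
    using tau_eq_Some_iff[OF assms(2)] by simp
  then have "real_of_int q * real m = real n * real_of_int p + real_of_int a"
    by (metis of_int_add of_int_mult of_int_of_nat_eq)
  then have "real m = (real_of_int p / real_of_int q) * real n + real_of_int a / real_of_int q"
    using assms(2) by (simp add: field_simps)
  then show ?case using snoc.IH[OF n] by (simp add: piv_append_singleton)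
qed

definition reachable_in :: "int \<Rightarrow> int \<Rightarrow> nat \<Rightarrow> nat \<Rightarrow> bool" where
  "reachable_in p q k m \<longleftrightarrow> (\<exists>v. length v = k \<and> set v \<subseteq> alphA p \<and> run p q 0 v = Some m)"

lemma reachable_in_0_iff: "reachable_in p q 0 m \<longleftrightarrow> m = 0"
  by (auto simp: reachable_in_def)

lemma reachable_in_Suc_iff:
  assumes "0 < q"
  shows "reachable_in p q (Suc k) m \<longleftrightarrow>
    (\<exists>n a. reachable_in p q k n \<and> 0 \<le> a \<and> a < p \<and> int n * p + a = q * int m)"
proof
  assume "reachable_in p q (Suc k) m"
  then obtain v where v: "length v = Suc k" "set v \<subseteq> alphA p" "run p q 0 v = Some m"
    unfolding reachable_in_def by blast
  then obtain w a where wa: "v = w @ [a]" by (metis length_Suc_conv_rev)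
  with v(3) obtain n where n: "run p q 0 w = Some n" and "tau p q n a = Some m"
    by (auto simp: run_append_singleton split: option.splits)
  then have "int n * p + a = q * int m" using tau_eq_Some_iff[OF assms] by simp
  moreover have "reachable_in p q k n" unfolding reachable_in_def using v wa n by auto
  moreover have "0 \<le> a" "a < p" using v(2) wa by (auto simp: alphA_def)
  ultimately show "\<exists>n a. reachable_in p q k n \<and> 0 \<le> a \<and> a < p \<and> int n * p + a = q * int m"
    by blast
next
  assume "\<exists>n a. reachable_in p q k n \<and> 0 \<le> a \<and> a < p \<and> int n * p + a = q * int m"
  then obtain n a v where v: "length v = k" "set v \<subseteq> alphA p" "run p q 0 v = Some n"
    and a: "0 \<le> a" "a < p" "int n * p + a = q * int m"
    unfolding reachable_in_def by blast
  have "run p q 0 (v @ [a]) = Some m"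
    using v(3) a(3) tau_eq_Some_iff[OF assms] by (simp add: run_append_singleton)
  moreover have "set (v @ [a]) \<subseteq> alphA p" using v(2) a by (auto simp: alphA_def)
  ultimately show "reachable_in p q (Suc k) m"
    unfolding reachable_in_def using v(1) by (metis length_append_singleton)
qed

lemma reachable_in_Suc_if_below:
  assumes down: "\<And>n'. n' \<le> n \<Longrightarrow> reachable_in p q k n'"
    and below: "q * int m < (int n + 1) * p" and "0 < p" "0 < q"
  shows "reachable_in p q (Suc k) m"
proof -
  define n' where "n' = (q * int m) div p"
  define a where "a = (q * int m) mod p"
  have a: "0 \<le> a" "a < p" unfolding a_def using \<open>0 < p\<close> by auto
  have n'_nonneg: "0 \<le> n'"
    unfolding n'_def using assms(3,4) by (simp add: pos_imp_zdiv_nonneg_iff)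
  have split: "q * int m = p * n' + a" unfolding n'_def a_def by simp
  with below a have "p * n' < p * (int n + 1)" by (simp add: algebra_simps)
  with \<open>0 < p\<close> have "nat n' \<le> n" by simp
  moreover have "int (nat n') * p + a = q * int m"
    using split n'_nonneg by (simp add: mult.commute)
  ultimately show ?thesis
    using down a reachable_in_Suc_iff[OF \<open>0 < q\<close>] by blast
qed

lemma reachable_in_downward_closed:
  assumes "reachable_in p q k m" "m' \<le> m" "0 < q" "0 < p"
  shows "reachable_in p q k m'"
  using assms(1,2)
proof (induction k arbitrary: m m')
  case 0
  then show ?case by (simp add: reachable_in_0_iff)
next
  case (Suc k)
  then obtain n a where n: "reachable_in p q k n"
    and a: "0 \<le> a" "a < p" "int n * p + a = q * int m"
    using reachable_in_Suc_iff[OF \<open>0 < q\<close>] by blast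
  have "q * int m' \<le> q * int m" using Suc.prems(2) \<open>0 < q\<close> by simp
  also have "\<dots> < (int n + 1) * p" using a by (simp add: algebra_simps)
  finally show ?case
    using reachable_in_Suc_if_below Suc.IH[OF n] assms(3,4) by blast
qed

text \<open>Only the upper bound on the digits of u matters.\<close>

lemma reachable_in_if_run_digits_below:
  assumes "\<forall>b \<in> set u. b < p" "run p q 0 u = Some m" "0 < q" "0 < p"
  shows "reachable_in p q (length u) m"
  using assms(1,2)
proof (induction u arbitrary: m rule: rev_induct)
  case Nil
  then show ?case by (simp add: reachable_in_0_iff)
next
  case (snoc b w)
  then obtain n where n: "run p q 0 w = Some n" and "tau p q n b = Some m"
    by (auto simp: run_append_singleton split: option.splits)
  then have "q * int m = int n * p + b" using tau_eq_Some_iff[OF assms(3)] by simp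
  moreover have "b < p" using snoc.prems(1) by simp
  ultimately have "q * int m < (int n + 1) * p" by (simp add: algebra_simps)
  moreover have "reachable_in p q (length w) n" using snoc.IH[OF _ n] snoc.prems(1) by simp
  ultimately show ?case
    using reachable_in_Suc_if_below[of n p q _ m] reachable_in_downward_closed assms(3,4)
    by fastforce
qed

theorem mainTheorem11:
  fixes p q :: int
  assumes "1 < q" and "q < p" and "coprime p q" and "p < 2*q - 1"
  shows "\<forall>u. accepted p q (alphB p q) u \<longrightarrow>
           (\<exists>v. accepted p q (alphA p) v \<and> piv p q u = piv p q v \<and> length u = length v)"
proof (intro allI impI)
  fix u assume "accepted p q (alphB p q) u"
  then obtain m where u: "set u \<subseteq> alphB p q" "run p q 0 u = Some m"
    unfolding accepted_def by auto
  have pos: "0 < q" "0 < p" using assms(1,2) by simp_all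
  have "\<forall>b \<in> set u. b < p" using u(1) by (auto simp: alphB_def)
  then obtain v where v: "length v = length u" "set v \<subseteq> alphA p" "run p q 0 v = Some m"
    using reachable_in_if_run_digits_below[OF _ u(2) pos] unfolding reachable_in_def by blast
  then show "\<exists>v. accepted p q (alphA p) v \<and> piv p q u = piv p q v \<and> length u = length v"
    using piv_eq_state_of_run[OF u(2) pos(1)] piv_eq_state_of_run[OF v(3) pos(1)]
    unfolding accepted_def by auto
qed

end
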